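(* Let $D^p$ be an instance of a PDB schema $\mathcal{D}^p$ and $\mathcal{IC}$ a set of denial constraints. If $HG(D^p,\mathcal{IC})$ is a hypertree, then $D^p\models\mathcal{IC}$ if and only if for each hyperedge $e$ of $HG(D^p,\mathcal{IC})$, $\sum_{t\in e}p(t)\le |e|-1$.
   Context: A PDB instance $D^p$ is a finite set of tuples, each with a probability $p(t)\in[0,1]$. Possible worlds are subsets of its tuples; an interpretation is a probability distribution $Pr$ on the possible worlds with $\sum_{w\ni t}Pr(w)=p(t)$ for each tuple $t$. A denial constraint is $\forall\vec x.\neg[R_1(\vec x_1)\wedge\dots\wedge R_m(\vec x_m)\wedge\phi]$ with $\phi$ a conjunction of comparisons ($=,\neq,\le,\ge,<,>$) among variables/constants. A model w.r.t. $\mathcal{IC}$ is an interpretation giving probability $0$ to every world violating some constraint; $D^p\models\mathcal{IC}$ iff a model exists. A conflicting set is a minimal set of tuples such that every world containing all of it violates $\mathcal{IC}$; the conflict hypergraph $HG(D^p,\mathcal{IC})$ has the tuples as nodes and the conflicting sets as hyperedges. A path between nodes is a sequence of distinct hyperedges, consecutive ones intersecting, the first containing one node and the last the other. A hypergraph is a hypertree if it is connected and there are no two hyperedges $e_1,e_2$ such that, after deleting the nodes of $e_1\cap e_2$ from all hyperedges, a remaining node of $e_1$ is still connected to a remaining node of $e_2$ ($\gamma$-acyclicity). *)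

theory Defs
  imports Complex_Main
begin

type_synonym ('r, 'v) tuple = "'r \<times> 'v list"

datatype 'v dterm = Var nat | Const 'v

datatype cmp = Eq | Neq | Le | Ge | Lt | Gt

fun eval_term :: "(nat \<Rightarrow> 'v) \<Rightarrow> 'v dterm \<Rightarrow> 'v" where
  "eval_term \<nu> (Var n) = \<nu> n"
| "eval_term \<nu> (Const c) = c"

fun holds_cmp :: "cmp \<Rightarrow> 'v::linorder \<Rightarrow> 'v \<Rightarrow> bool" where
  "holds_cmp Eq a b = (a = b)"
| "holds_cmp Neq a b = (a \<noteq> b)"
| "holds_cmp Le a b = (a \<le> b)"
| "holds_cmp Ge a b = (a \<ge> b)"
| "holds_cmp Lt a b = (a < b)"
| "holds_cmp Gt a b = (a > b)"

text \<open>A denial constraint  forall x. not (R1(x1) and ... and Rm(xm) and phi):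
  a list of atoms (relation name, argument terms) and a list of comparisons.\<close>
type_synonym ('r, 'v) denial_constraint =
  "('r \<times> 'v dterm list) list \<times> ('v dterm \<times> cmp \<times> 'v dterm) list"

definition violates_dc :: "('r, 'v::linorder) tuple set \<Rightarrow> ('r, 'v) denial_constraint \<Rightarrow> bool" where
  "violates_dc w dc \<longleftrightarrow>
     (\<exists>\<nu>. (\<forall>(R, ts) \<in> set (fst dc). (R, map (eval_term \<nu>) ts) \<in> w) \<and>
          (\<forall>(s, c, t) \<in> set (snd dc). holds_cmp c (eval_term \<nu> s) (eval_term \<nu> t)))"

definition violates :: "('r, 'v::linorder) tuple set \<Rightarrow> ('r, 'v) denial_constraint set \<Rightarrow> bool" where
  "violates w IC \<longleftrightarrow> (\<exists>dc \<in> IC. violates_dc w dc)"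

text \<open>PDB instance: finite tuple set D with probabilities p t in [0,1].
  Possible worlds: subsets of D.  An interpretation is a probability distribution
  on the possible worlds whose marginals are p.\<close>
definition interpretation_of :: "'t set \<Rightarrow> ('t \<Rightarrow> real) \<Rightarrow> ('t set \<Rightarrow> real) \<Rightarrow> bool" where
  "interpretation_of D p Pr \<longleftrightarrow>
     (\<forall>w \<in> Pow D. Pr w \<ge> 0) \<and> (\<Sum>w \<in> Pow D. Pr w) = 1 \<and>
     (\<forall>t \<in> D. (\<Sum>w \<in> {w \<in> Pow D. t \<in> w}. Pr w) = p t)"

definition is_model :: "('r, 'v::linorder) tuple set \<Rightarrow> (('r, 'v) tuple \<Rightarrow> real)
    \<Rightarrow> ('r, 'v) denial_constraint set \<Rightarrow> (('r, 'v) tuple set \<Rightarrow> real) \<Rightarrow> bool" where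
  "is_model D p IC Pr \<longleftrightarrow> interpretation_of D p Pr \<and>
     (\<forall>w \<in> Pow D. violates w IC \<longrightarrow> Pr w = 0)"

definition pdb_models :: "('r, 'v::linorder) tuple set \<Rightarrow> (('r, 'v) tuple \<Rightarrow> real)
    \<Rightarrow> ('r, 'v) denial_constraint set \<Rightarrow> bool" where
  "pdb_models D p IC \<longleftrightarrow> (\<exists>Pr. is_model D p IC Pr)"

definition forces_violation :: "('r, 'v::linorder) tuple set \<Rightarrow> ('r, 'v) denial_constraint set
    \<Rightarrow> ('r, 'v) tuple set \<Rightarrow> bool" where
  "forces_violation D IC S \<longleftrightarrow> S \<subseteq> D \<and> (\<forall>w. S \<subseteq> w \<and> w \<subseteq> D \<longrightarrow> violates w IC)"

definition conflicting_set :: "('r, 'v::linorder) tuple set \<Rightarrow> ('r, 'v) denial_constraint set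
    \<Rightarrow> ('r, 'v) tuple set \<Rightarrow> bool" where
  "conflicting_set D IC S \<longleftrightarrow> forces_violation D IC S \<and>
     (\<forall>S'. S' \<subset> S \<longrightarrow> \<not> forces_violation D IC S')"

text \<open>Hyperedges of the conflict hypergraph HG(D^p, IC); its node set is D.\<close>
definition conflict_edges :: "('r, 'v::linorder) tuple set \<Rightarrow> ('r, 'v) denial_constraint set
    \<Rightarrow> ('r, 'v) tuple set set" where
  "conflict_edges D IC = {S. conflicting_set D IC S}"

definition hg_path :: "'a set set \<Rightarrow> 'a set list \<Rightarrow> 'a \<Rightarrow> 'a \<Rightarrow> bool" where
  "hg_path E es u v \<longleftrightarrow> es \<noteq> [] \<and> distinct es \<and> set es \<subseteq> E \<and>
     (\<forall>i. Suc i < length es \<longrightarrow> es ! i \<inter> es ! Suc i \<noteq> {}) \<and>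
     u \<in> hd es \<and> v \<in> last es"

definition hg_connected_nodes :: "'a set set \<Rightarrow> 'a \<Rightarrow> 'a \<Rightarrow> bool" where
  "hg_connected_nodes E u v \<longleftrightarrow> (\<exists>es. hg_path E es u v)"

definition hg_connected :: "'a set \<Rightarrow> 'a set set \<Rightarrow> bool" where
  "hg_connected V E \<longleftrightarrow> (\<forall>u \<in> V. \<forall>v \<in> V. u \<noteq> v \<longrightarrow> hg_connected_nodes E u v)"

text \<open>Hypertree (gamma-acyclic, connected): there are no two distinct intersecting hyperedges
  e1, e2 such that, after removing the nodes of e1 \<inter> e2 from every hyperedge, some
  remaining node of e1 is connected to some remaining node of e2.\<close>
definition hypertree :: "'a set \<Rightarrow> 'a set set \<Rightarrow> bool" where
  "hypertree V E \<longleftrightarrow> hg_connected V E \<and>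
     \<not> (\<exists>e1 \<in> E. \<exists>e2 \<in> E. e1 \<noteq> e2 \<and> e1 \<inter> e2 \<noteq> {} \<and>
          (\<exists>x \<in> e1 - (e1 \<inter> e2). \<exists>y \<in> e2 - (e1 \<inter> e2).
             hg_connected_nodes ((\<lambda>e. e - (e1 \<inter> e2)) ` E) x y))"

end

theory Submission
  imports Defs
begin

text \<open>
  In a model, every world of positive probability misses some tuple of each conflicting set e,
  so \<open>\<Sum>t\<in>e. p t\<close>, the expected size of the intersection of e with the world, is at most
  \<open>|e| - 1\<close>.

  Conversely, a \<open>\<gamma>\<close>-acyclic hypergraph has a nest point v: a node whose incident hyperedges
  form a chain under inclusion. Deleting v and replacing the bound \<open>Pr(e \<subseteq> w) \<le> b\<close> of every
  hyperedge e through v by \<open>Pr(e - {v} \<subseteq> w) \<le> b + 1 - p v\<close>, induction gives a distribution on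
  the remaining tuples. Then v is added to each world w with a probability \<open>\<gamma> w\<close>, chosen so that
  v gets total probability \<open>p v\<close> while the worlds containing the larger hyperedges through v
  receive as little of it as possible; because these hyperedges are nested, one \<open>\<gamma>\<close> serves all
  of them.
\<close>

section \<open>Nest points of \<open>\<gamma>\<close>-acyclic hypergraphs\<close>

definition hg_adj :: "'a set set \<Rightarrow> 'a \<Rightarrow> 'a \<Rightarrow> bool" where
  "hg_adj E a b \<longleftrightarrow> (\<exists>e\<in>E. a \<in> e \<and> b \<in> e)"

definition gamma_acyclic :: "'a set set \<Rightarrow> bool" where
  "gamma_acyclic E \<longleftrightarrow> (\<forall>e1\<in>E. \<forall>e2\<in>E. e1 \<noteq> e2 \<longrightarrow> e1 \<inter> e2 \<noteq> {} \<longrightarrow>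
     (\<forall>x\<in>e1 - e1 \<inter> e2. \<forall>y\<in>e2 - e1 \<inter> e2. \<not> (hg_adj ((\<lambda>e. e - e1 \<inter> e2) ` E))\<^sup>*\<^sup>* x y))"

definition nest_point :: "'a set set \<Rightarrow> 'a \<Rightarrow> bool" where
  "nest_point E z \<longleftrightarrow> (\<forall>h1\<in>E. \<forall>h2\<in>E. z \<in> h1 \<longrightarrow> z \<in> h2 \<longrightarrow> h1 \<subseteq> h2 \<or> h2 \<subseteq> h1)"

lemma hg_adj_sym: "hg_adj E a b \<Longrightarrow> hg_adj E b a"
  by (auto simp: hg_adj_def)

lemma hg_adj_rtranclp_sym: "(hg_adj E)\<^sup>*\<^sup>* x y \<Longrightarrow> (hg_adj E)\<^sup>*\<^sup>* y x"
  by (induction rule: rtranclp_induct) (auto intro: converse_rtranclp_into_rtranclp hg_adj_sym)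

lemma hg_adj_rtranclp_mono:
  assumes "\<And>a b. hg_adj E a b \<Longrightarrow> hg_adj F a b" "(hg_adj E)\<^sup>*\<^sup>* x y"
  shows "(hg_adj F)\<^sup>*\<^sup>* x y"
  using assms(2) by (induction rule: rtranclp_induct) (auto intro: rtranclp.rtrancl_into_rtrancl assms(1))

lemma hg_connected_nodes_if_tranclp:
  assumes "(hg_adj E)\<^sup>+\<^sup>+ x y"
  shows "hg_connected_nodes E x y"
  using assms unfolding hg_connected_nodes_def
proof (induction rule: tranclp_induct)
  case (base y)
  then obtain e where "e \<in> E" "x \<in> e" "y \<in> e" by (auto simp: hg_adj_def)
  then have "hg_path E [e] x y" by (simp add: hg_path_def)
  then show ?case by blast
next
  case (step y z)
  then obtain es where es: "hg_path E es x y" by blast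
  from step obtain e where e: "e \<in> E" "y \<in> e" "z \<in> e" by (auto simp: hg_adj_def)
  show ?case
  proof (cases "e \<in> set es")
    case True
    then obtain k where k: "k < length es" "es ! k = e" by (auto simp: in_set_conv_nth)
    have "hg_path E (take (Suc k) es) x z"
      unfolding hg_path_def
    proof (intro conjI allI impI)
      show "x \<in> hd (take (Suc k) es)" using es k by (auto simp: hg_path_def hd_conv_nth)
      show "z \<in> last (take (Suc k) es)" using k e by (simp add: take_Suc_conv_app_nth)
      show "set (take (Suc k) es) \<subseteq> E" using es set_take_subset[of "Suc k" es] by (auto simp: hg_path_def)
    qed (use es k in \<open>auto simp: hg_path_def\<close>)
    then show ?thesis by blast
  next
    case False
    have "hg_path E (es @ [e]) x z"
      unfolding hg_path_def
    proof (intro conjI allI impI)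
      fix i assume i: "Suc i < length (es @ [e])"
      show "(es @ [e]) ! i \<inter> (es @ [e]) ! Suc i \<noteq> {}"
      proof (cases "Suc i < length es")
        case True
        then show ?thesis using es by (auto simp: hg_path_def nth_append)
      next
        case False
        then have "i = length es - 1" "es \<noteq> []" using i es by (auto simp: hg_path_def)
        then show ?thesis using es e by (auto simp: hg_path_def nth_append last_conv_nth)
      qed
    qed (use es e False in \<open>auto simp: hg_path_def\<close>)
    then show ?thesis by blast
  qed
qed

lemma gamma_acyclic_if_hypertree:
  assumes "hypertree V E"
  shows "gamma_acyclic E"
  unfolding gamma_acyclic_def
proof (intro ballI impI notI)
  fix e1 e2 x y
  assume e: "e1 \<in> E" "e2 \<in> E" "e1 \<noteq> e2" "e1 \<inter> e2 \<noteq> {}"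
    and x: "x \<in> e1 - e1 \<inter> e2" and y: "y \<in> e2 - e1 \<inter> e2"
    and xy: "(hg_adj ((\<lambda>e. e - e1 \<inter> e2) ` E))\<^sup>*\<^sup>* x y"
  have "x \<noteq> y" using x y by auto
  with xy have "hg_connected_nodes ((\<lambda>e. e - e1 \<inter> e2) ` E) x y"
    by (metis hg_connected_nodes_if_tranclp rtranclpD)
  then show False using assms e x y unfolding hypertree_def by blast
qed

lemma gamma_acyclic_subset:
  assumes "gamma_acyclic E" "E' \<subseteq> E"
  shows "gamma_acyclic E'"
  unfolding gamma_acyclic_def
proof (intro ballI impI notI)
  fix e1 e2 x y
  assume e: "e1 \<in> E'" "e2 \<in> E'" "e1 \<noteq> e2" "e1 \<inter> e2 \<noteq> {}" "x \<in> e1 - e1 \<inter> e2"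
    "y \<in> e2 - e1 \<inter> e2" and xy: "(hg_adj ((\<lambda>e. e - e1 \<inter> e2) ` E'))\<^sup>*\<^sup>* x y"
  have "(hg_adj ((\<lambda>e. e - e1 \<inter> e2) ` E))\<^sup>*\<^sup>* x y"
    by (rule hg_adj_rtranclp_mono[OF _ xy]) (use assms(2) in \<open>auto simp: hg_adj_def\<close>)
  then show False using assms e unfolding gamma_acyclic_def by blast
qed

lemma gamma_acyclic_restrict:
  assumes "gamma_acyclic E"
  shows "gamma_acyclic ((\<lambda>h. h \<inter> W) ` E)"
  unfolding gamma_acyclic_def
proof (intro ballI impI notI)
  fix e1' e2' x y
  assume e1': "e1' \<in> (\<lambda>h. h \<inter> W) ` E" and e2': "e2' \<in> (\<lambda>h. h \<inter> W) ` E"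
    and ne: "e1' \<noteq> e2'" "e1' \<inter> e2' \<noteq> {}" and xy: "x \<in> e1' - e1' \<inter> e2'" "y \<in> e2' - e1' \<inter> e2'"
    and conn: "(hg_adj ((\<lambda>e. e - e1' \<inter> e2') ` (\<lambda>h. h \<inter> W) ` E))\<^sup>*\<^sup>* x y"
  obtain e1 e2 where e: "e1 \<in> E" "e1' = e1 \<inter> W" "e2 \<in> E" "e2' = e2 \<inter> W"
    using e1' e2' by blast
  have "(hg_adj ((\<lambda>e. e - e1 \<inter> e2) ` E))\<^sup>*\<^sup>* x y"
    by (rule hg_adj_rtranclp_mono[OF _ conn]) (auto simp: hg_adj_def e)
  moreover have "e1 \<noteq> e2" "e1 \<inter> e2 \<noteq> {}" "x \<in> e1 - e1 \<inter> e2" "y \<in> e2 - e1 \<inter> e2"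
    using ne xy e by auto
  ultimately show False using assms e unfolding gamma_acyclic_def by blast
qed

lemma nest_point_restrict:
  assumes "nest_point ((\<lambda>h. h \<inter> W) ` E) z" "\<And>h. h \<in> E \<Longrightarrow> z \<in> h \<Longrightarrow> h \<subseteq> W"
  shows "nest_point E z"
  using assms unfolding nest_point_def by (metis image_eqI inf.absorb1)

lemma nest_point_remove_covering_edge:
  assumes "nest_point (E - {g}) z" "\<Union>E \<subseteq> g"
  shows "nest_point E z"
  using assms unfolding nest_point_def by blast

lemma hg_component_closed:
  assumes "h \<in> E" "z \<in> h" "z \<notin> I" "(hg_adj ((\<lambda>h. h - I) ` E))\<^sup>*\<^sup>* y z"
  shows "h \<subseteq> {c. (hg_adj ((\<lambda>h. h - I) ` E))\<^sup>*\<^sup>* y c} \<union> I"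
proof
  fix w assume "w \<in> h"
  show "w \<in> {c. (hg_adj ((\<lambda>h. h - I) ` E))\<^sup>*\<^sup>* y c} \<union> I"
  proof (cases "w \<in> I")
    case False
    with assms \<open>w \<in> h\<close> have "hg_adj ((\<lambda>h. h - I) ` E) z w"
      unfolding hg_adj_def by blast
    with assms(4) show ?thesis by (simp add: rtranclp.rtrancl_into_rtrancl)
  qed simp
qed

lemma gamma_acyclic_component_disjoint:
  assumes "gamma_acyclic E" "g \<in> E" "g2 \<in> E" "g \<noteq> g2" "g \<inter> g2 \<noteq> {}" "y \<in> g2 - g"
  shows "{c. (hg_adj ((\<lambda>h. h - g \<inter> g2) ` E))\<^sup>*\<^sup>* y c} \<inter> g = {}"
proof (rule ccontr)
  assume "{c. (hg_adj ((\<lambda>h. h - g \<inter> g2) ` E))\<^sup>*\<^sup>* y c} \<inter> g \<noteq> {}"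
  then obtain c where c: "c \<in> g" and yc: "(hg_adj ((\<lambda>h. h - g \<inter> g2) ` E))\<^sup>*\<^sup>* y c"
    by blast
  have "c \<noteq> y" using c assms(6) by blast
  with yc have "c \<notin> g \<inter> g2"
    by (induction rule: rtranclp_induct) (auto simp: hg_adj_def)
  then show False
    using assms c hg_adj_rtranclp_sym[OF yc] unfolding gamma_acyclic_def by blast
qed

lemma gamma_acyclic_separating_set:
  assumes "gamma_acyclic E" "g \<in> E" "\<And>h. h \<in> E \<Longrightarrow> g \<subseteq> h \<Longrightarrow> h = g" "\<not> \<Union>E \<subseteq> g"
  obtains W where "\<not> g \<subseteq> W" "\<Union>E \<inter> W - g \<noteq> {}"
    "\<And>z h. z \<in> W - g \<Longrightarrow> h \<in> E \<Longrightarrow> z \<in> h \<Longrightarrow> h \<subseteq> W"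
proof (cases "\<exists>g2\<in>E. g \<inter> g2 \<noteq> {} \<and> \<not> g2 \<subseteq> g")
  case True
  then obtain g2 y where g2: "g2 \<in> E" "g \<inter> g2 \<noteq> {}" "y \<in> g2 - g" by blast
  then have "\<not> g \<subseteq> g2" "g \<noteq> g2" using assms(3) by blast+
  define C where "C = {c. (hg_adj ((\<lambda>h. h - g \<inter> g2) ` E))\<^sup>*\<^sup>* y c}"
  have Cg: "C \<inter> g = {}"
    unfolding C_def using gamma_acyclic_component_disjoint[OF assms(1,2) g2(1) \<open>g \<noteq> g2\<close> g2(2,3)] .
  show ?thesis
  proof (rule that[of "C \<union> g \<inter> g2"])
    show "\<not> g \<subseteq> C \<union> g \<inter> g2" using Cg \<open>\<not> g \<subseteq> g2\<close> by blast
    have "y \<in> C" unfolding C_def by simp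
    then show "\<Union>E \<inter> (C \<union> g \<inter> g2) - g \<noteq> {}" using g2 by blast
  next
    fix z h assume "z \<in> C \<union> g \<inter> g2 - g" "h \<in> E" "z \<in> h"
    then show "h \<subseteq> C \<union> g \<inter> g2"
      using hg_component_closed[of h E z "g \<inter> g2" y] unfolding C_def by blast
  qed
next
  case False
  obtain h x where "h \<in> E" "x \<in> h" "x \<notin> g" using assms(4) by blast
  then have "g \<noteq> {}" using assms(3) by blast
  show ?thesis
  proof (rule that[of "- g"])
    show "\<not> g \<subseteq> - g" using \<open>g \<noteq> {}\<close> by blast
    show "\<Union>E \<inter> - g - g \<noteq> {}" using assms(4) by blast
    show "h \<subseteq> - g" if "z \<in> - g - g" "h \<in> E" "z \<in> h" for z h
      using False that by blast
  qed
qed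

lemma nest_point_if_notin_Union: "z \<notin> \<Union>E \<Longrightarrow> nest_point E z"
  unfolding nest_point_def by blast

lemma finite_has_maximal_superset:
  assumes "finite E" "h \<in> E" "f \<subseteq> h"
  obtains g where "g \<in> E" "f \<subseteq> g" "\<And>h. h \<in> E \<Longrightarrow> g \<subseteq> h \<Longrightarrow> h = g"
proof -
  have "finite {h \<in> E. f \<subseteq> h}" "h \<in> {h \<in> E. f \<subseteq> h}" using assms by simp_all
  from finite_has_maximal2[OF this] obtain g where
    "g \<in> {h \<in> E. f \<subseteq> h}" and max: "\<forall>h \<in> {h \<in> E. f \<subseteq> h}. g \<subseteq> h \<longrightarrow> g = h"
    by blast
  then have g: "g \<in> E" "f \<subseteq> g" by simp_all
  moreover have "h = g" if "h \<in> E" "g \<subseteq> h" for h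
    using max that g(2) by auto
  ultimately show ?thesis by (rule that)
qed

lemma card_Union_plus_card_remove_less:
  assumes "finite (\<Union>E)" "g \<in> E"
  shows "card (\<Union>(E - {g})) + card (E - {g}) < card (\<Union>E) + card E"
proof -
  have "card (\<Union>(E - {g})) \<le> card (\<Union>E)" using assms(1) by (intro card_mono) auto
  moreover have "card (E - {g}) < card E"
    using card_Diff1_less[OF finite_UnionD[OF assms(1)] assms(2)] .
  ultimately show ?thesis by linarith
qed

lemma card_Union_plus_card_restrict_less:
  assumes "finite (\<Union>E)" "g \<in> E" "\<not> g \<subseteq> W"
  shows "card (\<Union>((\<lambda>h. h \<inter> W) ` E)) + card ((\<lambda>h. h \<inter> W) ` E) < card (\<Union>E) + card E"
proof -
  have "\<Union>((\<lambda>h. h \<inter> W) ` E) \<subset> \<Union>E" using assms(2,3) by blast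
  then have "card (\<Union>((\<lambda>h. h \<inter> W) ` E)) < card (\<Union>E)" by (rule psubset_card_mono[OF assms(1)])
  moreover have "card ((\<lambda>h. h \<inter> W) ` E) \<le> card E"
    by (rule card_image_le[OF finite_UnionD[OF assms(1)]])
  ultimately show ?thesis by linarith
qed

text \<open>
  The induction needs a nest point avoiding a given hyperedge f; \<open>f = {}\<close> is allowed so that
  the statement also covers the existence of some nest point.
\<close>

lemma gamma_acyclic_nest_point_outside:
  assumes "finite (\<Union>E)" "gamma_acyclic E" "f \<in> insert {} E" "\<not> \<Union>E \<subseteq> f"
  shows "\<exists>z\<in>\<Union>E - f. nest_point E z"
  using assms
proof (induction "card (\<Union>E) + card E" arbitrary: E f rule: less_induct)
  case less
  have "\<exists>h\<in>E. f \<subseteq> h"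
  proof (cases "f = {}")
    case True
    then show ?thesis using less.prems(4) by blast
  qed (use less.prems(3) in blast)
  then obtain h where "h \<in> E" "f \<subseteq> h" by blast
  then obtain g where g: "g \<in> E" "f \<subseteq> g" and gmax: "\<And>h. h \<in> E \<Longrightarrow> g \<subseteq> h \<Longrightarrow> h = g"
    using finite_has_maximal_superset[OF finite_UnionD[OF less.prems(1)]] by blast
  show ?case
  proof (cases "\<Union>E \<subseteq> g")
    case True
    have "\<exists>z\<in>\<Union>E - f. nest_point (E - {g}) z"
    proof (cases "\<Union>E - f \<subseteq> \<Union>(E - {g})")
      case covered: True
      have "finite (\<Union>(E - {g}))" using less.prems(1) by (rule finite_subset[rotated]) auto
      moreover have "gamma_acyclic (E - {g})" using less.prems(2) by (rule gamma_acyclic_subset) auto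
      moreover have "f \<in> insert {} (E - {g})" "\<not> \<Union>(E - {g}) \<subseteq> f"
        using less.prems(3,4) True covered by auto
      ultimately show ?thesis
        using less.hyps[OF card_Union_plus_card_remove_less[OF less.prems(1) g(1)]] by blast
    next
      case False
      then obtain z where z: "z \<in> \<Union>E - f" "z \<notin> \<Union>(E - {g})" unfolding subset_iff by blast
      show ?thesis using z(1) nest_point_if_notin_Union[OF z(2)] by (rule bexI[rotated])
    qed
    then show ?thesis using nest_point_remove_covering_edge[of E g] True by blast
  next
    case False
    obtain W where W: "\<not> g \<subseteq> W" "\<Union>E \<inter> W - g \<noteq> {}"
      and closed: "\<And>z h. z \<in> W - g \<Longrightarrow> h \<in> E \<Longrightarrow> z \<in> h \<Longrightarrow> h \<subseteq> W"
      using gamma_acyclic_separating_set[OF less.prems(2) g(1) gmax False] by blast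
    define EW where "EW = (\<lambda>h. h \<inter> W) ` E"
    have smaller: "card (\<Union>EW) + card EW < card (\<Union>E) + card E"
      unfolding EW_def by (rule card_Union_plus_card_restrict_less[OF less.prems(1) g(1) W(1)])
    have "finite (\<Union>EW)" using less.prems(1) unfolding EW_def by (rule finite_subset[rotated]) auto
    moreover have "gamma_acyclic EW" unfolding EW_def by (rule gamma_acyclic_restrict[OF less.prems(2)])
    moreover have "g \<inter> W \<in> insert {} EW" "\<not> \<Union>EW \<subseteq> g \<inter> W"
      using g(1) W(2) unfolding EW_def by blast+
    ultimately have "\<exists>z\<in>\<Union>EW - g \<inter> W. nest_point EW z" by (rule less.hyps[OF smaller])
    then obtain z where z: "z \<in> \<Union>EW - g \<inter> W" "nest_point EW z" by blast
    then have zW: "z \<in> W - g" "z \<in> \<Union>E - f" using g(2) unfolding EW_def by auto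
    have "nest_point E z"
      by (rule nest_point_restrict[OF z(2)[unfolded EW_def] closed[OF zW(1)]])
    with zW(2) show ?thesis by (rule bexI[rotated])
  qed
qed

lemma gamma_acyclic_has_nest_point:
  assumes "finite V" "V \<noteq> {}" "\<Union>E \<subseteq> V" "gamma_acyclic E"
  obtains z where "z \<in> V" "nest_point E z"
proof (cases "V \<subseteq> \<Union>E")
  case True
  then have "\<Union>E = V" using assms(3) by blast
  then have "\<exists>z\<in>\<Union>E - {}. nest_point E z"
    using gamma_acyclic_nest_point_outside[of E "{}"] assms by simp
  then show ?thesis using \<open>\<Union>E = V\<close> that by blast
next
  case False
  then obtain z where z: "z \<in> V" "z \<notin> \<Union>E" unfolding subset_iff by blast
  show ?thesis by (rule that[OF z(1) nest_point_if_notin_Union[OF z(2)]])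
qed

section \<open>Weights bounded on a chain\<close>

lemma exists_weight_vanishing_on:
  fixes P :: "'w \<Rightarrow> real"
  assumes "finite \<Omega>" "A \<subseteq> \<Omega>" "0 \<le> q" "q \<le> sum P (\<Omega> - A)"
  obtains \<gamma> where "\<forall>\<omega>\<in>\<Omega>. 0 \<le> \<gamma> \<omega> \<and> \<gamma> \<omega> \<le> 1" "\<forall>\<omega>\<in>A. \<gamma> \<omega> = 0"
    "(\<Sum>\<omega>\<in>\<Omega>. P \<omega> * \<gamma> \<omega>) = q"
proof -
  define R where "R = sum P (\<Omega> - A)"
  define c where "c = (if R = 0 then 0 else q / R)"
  have c: "0 \<le> c" "c \<le> 1" "c * R = q"
    using assms(3,4) unfolding c_def R_def by auto
  define \<gamma> where "\<gamma> \<omega> = (if \<omega> \<in> A then 0 else c)" for \<omega>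
  have "(\<Sum>\<omega>\<in>\<Omega>. P \<omega> * \<gamma> \<omega>) = (\<Sum>\<omega>\<in>\<Omega> - A. P \<omega> * \<gamma> \<omega>)"
    using sum.subset_diff[OF assms(2,1), of "\<lambda>\<omega>. P \<omega> * \<gamma> \<omega>"] by (simp add: \<gamma>_def)
  also have "\<dots> = (\<Sum>\<omega>\<in>\<Omega> - A. P \<omega> * c)" by (rule sum.cong) (auto simp: \<gamma>_def)
  also have "\<dots> = q" using c(3) by (simp add: R_def sum_distrib_left mult.commute)
  finally show ?thesis
    by (rule that[rotated 2]) (use c(1,2) in \<open>auto simp: \<gamma>_def\<close>)
qed

lemma exists_weight_one_outside:
  fixes P :: "'w \<Rightarrow> real"
  assumes "finite \<Omega>" "B \<subseteq> \<Omega>" "\<forall>\<omega>\<in>B. 0 \<le> \<gamma>' \<omega> \<and> \<gamma>' \<omega> \<le> 1"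
  obtains \<gamma> where "\<forall>\<omega>\<in>\<Omega>. 0 \<le> \<gamma> \<omega> \<and> \<gamma> \<omega> \<le> 1"
    "(\<Sum>\<omega>\<in>\<Omega>. P \<omega> * \<gamma> \<omega>) = (\<Sum>\<omega>\<in>B. P \<omega> * \<gamma>' \<omega>) + sum P (\<Omega> - B)"
    "\<And>A. A \<subseteq> B \<Longrightarrow> (\<Sum>\<omega>\<in>A. P \<omega> * \<gamma> \<omega>) = (\<Sum>\<omega>\<in>A. P \<omega> * \<gamma>' \<omega>)"
proof
  define \<gamma> where "\<gamma> \<omega> = (if \<omega> \<in> B then \<gamma>' \<omega> else 1)" for \<omega>
  show on_B: "(\<Sum>\<omega>\<in>A. P \<omega> * \<gamma> \<omega>) = (\<Sum>\<omega>\<in>A. P \<omega> * \<gamma>' \<omega>)" if "A \<subseteq> B" for A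
    using that unfolding \<gamma>_def by (intro sum.cong) auto
  have "(\<Sum>\<omega>\<in>\<Omega> - B. P \<omega> * \<gamma> \<omega>) = sum P (\<Omega> - B)" unfolding \<gamma>_def by (intro sum.cong) auto
  then show "(\<Sum>\<omega>\<in>\<Omega>. P \<omega> * \<gamma> \<omega>) = (\<Sum>\<omega>\<in>B. P \<omega> * \<gamma>' \<omega>) + sum P (\<Omega> - B)"
    using sum.subset_diff[OF assms(2,1), of "\<lambda>\<omega>. P \<omega> * \<gamma> \<omega>"] on_B[of B] by simp
  show "\<forall>\<omega>\<in>\<Omega>. 0 \<le> \<gamma> \<omega> \<and> \<gamma> \<omega> \<le> 1" using assms(3) unfolding \<gamma>_def by auto
qed

lemma exists_weight_bounded_on_chain:
  fixes P :: "'w \<Rightarrow> real"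
  assumes "finite \<Omega>" "finite \<A>" "\<forall>A\<in>\<A>. A \<subseteq> \<Omega>" "\<forall>A\<in>\<A>. \<forall>B\<in>\<A>. A \<subseteq> B \<or> B \<subseteq> A"
    "0 \<le> q" "q \<le> sum P \<Omega>"
  shows "\<exists>\<gamma>. (\<forall>\<omega>\<in>\<Omega>. 0 \<le> \<gamma> \<omega> \<and> \<gamma> \<omega> \<le> 1) \<and> (\<Sum>\<omega>\<in>\<Omega>. P \<omega> * \<gamma> \<omega>) = q \<and>
    (\<forall>A\<in>\<A>. (\<Sum>\<omega>\<in>A. P \<omega> * \<gamma> \<omega>) \<le> max 0 (q - sum P \<Omega> + sum P A))"
  using assms
proof (induction "card \<A>" arbitrary: \<A> \<Omega> q rule: less_induct)
  case less
  show ?case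
  proof (cases "\<A> = {}")
    case True
    then show ?thesis
      using exists_weight_vanishing_on[OF less.prems(1), of "{}" q P] less.prems(5,6) by auto
  next
    case False
    then obtain A1 where A1: "A1 \<in> \<A>" "\<forall>B\<in>\<A>. A1 \<subseteq> B \<longrightarrow> A1 = B"
      using finite_has_maximal2[OF less.prems(2)] by blast
    then have top: "\<forall>A\<in>\<A>. A \<subseteq> A1" using less.prems(4) by blast
    have A1\<Omega>: "A1 \<subseteq> \<Omega>" using A1(1) less.prems(3) by blast
    define R where "R = sum P (\<Omega> - A1)"
    have split: "sum P \<Omega> = sum P A1 + R"
      unfolding R_def using sum.subset_diff[OF A1\<Omega> less.prems(1), of P] by simp
    show ?thesis
    proof (cases "q \<le> R")
      case True
      then obtain \<gamma> where \<gamma>: "\<forall>\<omega>\<in>\<Omega>. 0 \<le> \<gamma> \<omega> \<and> \<gamma> \<omega> \<le> 1" "\<forall>\<omega>\<in>A1. \<gamma> \<omega> = 0"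
        "(\<Sum>\<omega>\<in>\<Omega>. P \<omega> * \<gamma> \<omega>) = q"
        using exists_weight_vanishing_on[OF less.prems(1) A1\<Omega> less.prems(5)] unfolding R_def
        by blast
      have "(\<Sum>\<omega>\<in>A. P \<omega> * \<gamma> \<omega>) = 0" if "A \<in> \<A>" for A
        using that top \<gamma>(2) by (intro sum.neutral) auto
      then show ?thesis using \<gamma>(1,3) by auto
    next
      case False
      \<comment> \<open>saturate the complement of A1 and recurse into A1 with what is left\<close>
      have "card (\<A> - {A1}) < card \<A>" by (rule card_Diff1_less[OF less.prems(2) A1(1)])
      moreover have "finite A1" using A1\<Omega> less.prems(1) by (rule finite_subset)
      moreover have "\<forall>A\<in>\<A> - {A1}. A \<subseteq> A1" using top by blast
      moreover have "\<forall>A\<in>\<A> - {A1}. \<forall>B\<in>\<A> - {A1}. A \<subseteq> B \<or> B \<subseteq> A" using less.prems(4) by blast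
      moreover have "0 \<le> q - R" "q - R \<le> sum P A1" using False less.prems(6) split by simp_all
      ultimately obtain \<gamma>' where \<gamma>': "\<forall>\<omega>\<in>A1. 0 \<le> \<gamma>' \<omega> \<and> \<gamma>' \<omega> \<le> 1"
        "(\<Sum>\<omega>\<in>A1. P \<omega> * \<gamma>' \<omega>) = q - R"
        "\<forall>A\<in>\<A> - {A1}. (\<Sum>\<omega>\<in>A. P \<omega> * \<gamma>' \<omega>) \<le> max 0 (q - R - sum P A1 + sum P A)"
        using less.hyps[of "\<A> - {A1}" A1 "q - R"] less.prems(2) by blast
      obtain \<gamma> where \<gamma>: "\<forall>\<omega>\<in>\<Omega>. 0 \<le> \<gamma> \<omega> \<and> \<gamma> \<omega> \<le> 1"
        "(\<Sum>\<omega>\<in>\<Omega>. P \<omega> * \<gamma> \<omega>) = (\<Sum>\<omega>\<in>A1. P \<omega> * \<gamma>' \<omega>) + R"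
        and on_A1: "\<And>A. A \<subseteq> A1 \<Longrightarrow> (\<Sum>\<omega>\<in>A. P \<omega> * \<gamma> \<omega>) = (\<Sum>\<omega>\<in>A. P \<omega> * \<gamma>' \<omega>)"
        using exists_weight_one_outside[OF less.prems(1) A1\<Omega> \<gamma>'(1)] unfolding R_def by blast
      have "(\<Sum>\<omega>\<in>\<Omega>. P \<omega> * \<gamma> \<omega>) = q" using \<gamma>(2) \<gamma>'(2) by simp
      moreover note \<gamma>(1)
      moreover have "(\<Sum>\<omega>\<in>A. P \<omega> * \<gamma> \<omega>) \<le> max 0 (q - sum P \<Omega> + sum P A)" if "A \<in> \<A>" for A
      proof (cases "A = A1")
        case False
        with that have "(\<Sum>\<omega>\<in>A. P \<omega> * \<gamma>' \<omega>) \<le> max 0 (q - R - sum P A1 + sum P A)"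
          using \<gamma>'(3) by blast
        then show ?thesis using on_A1 that top split by simp
      qed (use on_A1 \<gamma>'(2) split in simp)
      ultimately show ?thesis by blast
    qed
  qed
qed

section \<open>Distributions with bounded hyperedge probabilities\<close>

definition extend_distribution :: "'a \<Rightarrow> ('a set \<Rightarrow> real) \<Rightarrow> ('a set \<Rightarrow> real) \<Rightarrow> 'a set \<Rightarrow> real" where
  "extend_distribution v \<gamma> P w =
     P (w - {v}) * (if v \<in> w then \<gamma> (w - {v}) else 1 - \<gamma> (w - {v}))"

lemma sum_Pow_insert:
  assumes "finite A" "v \<notin> A"
  shows "(\<Sum>w\<in>Pow (insert v A). f w) = (\<Sum>w\<in>Pow A. f w + f (insert v w))"
proof -
  have "inj_on (insert v) (Pow A)"
    unfolding inj_on_def using assms(2) by (metis Diff_insert_absorb PowD subsetD)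
  then have "(\<Sum>w\<in>insert v ` Pow A. f w) = (\<Sum>w\<in>Pow A. f (insert v w))"
    by (simp add: sum.reindex)
  moreover have "(\<Sum>w\<in>Pow (insert v A). f w) = (\<Sum>w\<in>Pow A. f w) + (\<Sum>w\<in>insert v ` Pow A. f w)"
    unfolding Pow_insert by (rule sum.union_disjoint) (use assms in auto)
  ultimately show ?thesis by (simp add: sum.distrib)
qed

lemma sum_extend_distribution:
  assumes "finite V" "v \<notin> V"
  shows "(\<Sum>w\<in>{w \<in> Pow (insert v V). S \<subseteq> w}. extend_distribution v \<gamma> P w) =
    (if v \<in> S then (\<Sum>w\<in>{w \<in> Pow V. S - {v} \<subseteq> w}. P w * \<gamma> w)
     else (\<Sum>w\<in>{w \<in> Pow V. S \<subseteq> w}. P w))"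
proof -
  have "v \<notin> w" if "w \<in> Pow V" for w using that assms(2) by blast
  then have ext: "extend_distribution v \<gamma> P w = P w * (1 - \<gamma> w)"
    "extend_distribution v \<gamma> P (insert v w) = P w * \<gamma> w" if "w \<in> Pow V" for w
    using that by (simp_all add: extend_distribution_def)
  have "(\<Sum>w\<in>{w \<in> Pow (insert v V). S \<subseteq> w}. extend_distribution v \<gamma> P w) =
      (\<Sum>w\<in>Pow (insert v V). if S \<subseteq> w then extend_distribution v \<gamma> P w else 0)"
    by (rule sum.inter_filter) (simp add: assms(1))
  also have "\<dots> = (\<Sum>w\<in>Pow V. if v \<in> S then (if S - {v} \<subseteq> w then P w * \<gamma> w else 0)
      else (if S \<subseteq> w then P w else 0))"
    unfolding sum_Pow_insert[OF assms]
    by (rule sum.cong) (use \<open>\<And>w. w \<in> Pow V \<Longrightarrow> v \<notin> w\<close> in \<open>auto simp: ext algebra_simps subset_insert\<close>)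
  also have "\<dots> = (if v \<in> S then (\<Sum>w\<in>{w \<in> Pow V. S - {v} \<subseteq> w}. P w * \<gamma> w)
      else (\<Sum>w\<in>{w \<in> Pow V. S \<subseteq> w}. P w))"
    using assms(1) by (cases "v \<in> S") (simp_all only: sum.inter_filter finite_Pow_iff if_True if_False)
  finally show ?thesis .
qed

lemma interpretation_of_extend_distribution:
  assumes "interpretation_of V p P" "finite V" "v \<notin> V" "\<forall>w\<in>Pow V. 0 \<le> \<gamma> w \<and> \<gamma> w \<le> 1"
    "(\<Sum>w\<in>Pow V. P w * \<gamma> w) = p v"
  shows "interpretation_of (insert v V) p (extend_distribution v \<gamma> P)"
  unfolding interpretation_of_def
proof (intro conjI ballI)
  fix w assume "w \<in> Pow (insert v V)"
  then have "w - {v} \<in> Pow V" by blast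
  then have "0 \<le> P (w - {v})" "0 \<le> \<gamma> (w - {v})" "\<gamma> (w - {v}) \<le> 1"
    using assms(1,4) by (auto simp: interpretation_of_def)
  then show "0 \<le> extend_distribution v \<gamma> P w"
    unfolding extend_distribution_def by (metis diff_ge_0_iff_ge mult_nonneg_nonneg)
next
  show "(\<Sum>w\<in>Pow (insert v V). extend_distribution v \<gamma> P w) = 1"
    using sum_extend_distribution[OF assms(2,3), where S = "{}"] assms(1)
    by (simp add: interpretation_of_def Pow_def[symmetric])
next
  fix t assume "t \<in> insert v V"
  moreover have "{w \<in> Pow U. {t} \<subseteq> w} = {w \<in> Pow U. t \<in> w}" for U by blast
  ultimately show "(\<Sum>w\<in>{w \<in> Pow (insert v V). t \<in> w}. extend_distribution v \<gamma> P w) = p t"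
    using sum_extend_distribution[OF assms(2,3), where S = "{t}"] assms(1,5)
    by (auto simp: interpretation_of_def Pow_def[symmetric])
qed

lemma nest_point_upsets_chain:
  assumes "nest_point (S ` I) v"
    and "A \<in> (\<lambda>i. {w \<in> Pow V. S i - {v} \<subseteq> w}) ` {i \<in> I. v \<in> S i}"
    and "B \<in> (\<lambda>i. {w \<in> Pow V. S i - {v} \<subseteq> w}) ` {i \<in> I. v \<in> S i}"
  shows "A \<subseteq> B \<or> B \<subseteq> A"
proof -
  obtain i j where ij: "i \<in> I" "v \<in> S i" "j \<in> I" "v \<in> S j"
    and AB: "A = {w \<in> Pow V. S i - {v} \<subseteq> w}" "B = {w \<in> Pow V. S j - {v} \<subseteq> w}"
    using assms(2,3) by blast
  have "S i \<subseteq> S j \<or> S j \<subseteq> S i"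
    using assms(1) ij unfolding nest_point_def by simp
  then show ?thesis unfolding AB by blast
qed

lemma interpretation_bounding_edges_insert:
  fixes p :: "'a \<Rightarrow> real" and S :: "'i \<Rightarrow> 'a set" and b :: "'i \<Rightarrow> real"
  assumes "finite V" "v \<notin> V" "0 \<le> p v" "p v \<le> 1" "nest_point (S ` I) v" "\<forall>i\<in>I. 0 \<le> b i"
    and interp: "interpretation_of V p P"
    and bound: "\<forall>i\<in>I. (\<Sum>w\<in>{w \<in> Pow V. S i - {v} \<subseteq> w}. P w)
                      \<le> (if v \<in> S i then b i + 1 - p v else b i)"
  shows "\<exists>P'. interpretation_of (insert v V) p P' \<and>
    (\<forall>i\<in>I. (\<Sum>w\<in>{w \<in> Pow (insert v V). S i \<subseteq> w}. P' w) \<le> b i)"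
proof -
  define \<A> where "\<A> = (\<lambda>i. {w \<in> Pow V. S i - {v} \<subseteq> w}) ` {i \<in> I. v \<in> S i}"
  have sub: "\<forall>A\<in>\<A>. A \<subseteq> Pow V" unfolding \<A>_def by auto
  then have "\<A> \<subseteq> Pow (Pow V)" by auto
  then have fin: "finite \<A>" by (rule finite_subset) (simp add: assms(1))
  have chain: "\<forall>A\<in>\<A>. \<forall>B\<in>\<A>. A \<subseteq> B \<or> B \<subseteq> A"
    unfolding \<A>_def by (intro ballI nest_point_upsets_chain[OF assms(5)])
  have total: "sum P (Pow V) = 1" using interp by (simp add: interpretation_of_def)
  obtain \<gamma> where \<gamma>: "\<forall>w\<in>Pow V. 0 \<le> \<gamma> w \<and> \<gamma> w \<le> 1" "(\<Sum>w\<in>Pow V. P w * \<gamma> w) = p v"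
    "\<forall>A\<in>\<A>. (\<Sum>w\<in>A. P w * \<gamma> w) \<le> max 0 (p v - 1 + sum P A)"
    using exists_weight_bounded_on_chain[OF _ fin sub chain assms(3), of P] assms(1,4)
    unfolding total by auto
  have "(\<Sum>w\<in>{w \<in> Pow (insert v V). S i \<subseteq> w}. extend_distribution v \<gamma> P w) \<le> b i"
    if "i \<in> I" for i
  proof (cases "v \<in> S i")
    case True
    then have "{w \<in> Pow V. S i - {v} \<subseteq> w} \<in> \<A>" unfolding \<A>_def using that by blast
    then have "(\<Sum>w\<in>{w \<in> Pow V. S i - {v} \<subseteq> w}. P w * \<gamma> w)
        \<le> max 0 (p v - 1 + (\<Sum>w\<in>{w \<in> Pow V. S i - {v} \<subseteq> w}. P w))"
      using \<gamma>(3) by blast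
    moreover have "(\<Sum>w\<in>{w \<in> Pow V. S i - {v} \<subseteq> w}. P w) \<le> b i + 1 - p v"
      using bound that True by auto
    ultimately have "(\<Sum>w\<in>{w \<in> Pow V. S i - {v} \<subseteq> w}. P w * \<gamma> w) \<le> b i"
      using assms(6) that by auto
    then show ?thesis using sum_extend_distribution[OF assms(1,2)] True by simp
  next
    case False
    then have "S i - {v} = S i" by blast
    then show ?thesis
      using sum_extend_distribution[OF assms(1,2), where S = "S i"] bspec[OF bound that] False by simp
  qed
  moreover have "interpretation_of (insert v V) p (extend_distribution v \<gamma> P)"
    by (rule interpretation_of_extend_distribution[OF interp assms(1,2) \<gamma>(1,2)])
  ultimately show ?thesis by blast
qed

lemma exists_interpretation_bounding_edges:
  fixes p :: "'a \<Rightarrow> real" and S :: "'i \<Rightarrow> 'a set" and b :: "'i \<Rightarrow> real"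
  assumes "finite V" "\<forall>t\<in>V. 0 \<le> p t \<and> p t \<le> 1" "gamma_acyclic (S ` I)"
    "\<forall>i\<in>I. S i \<subseteq> V \<and> 0 \<le> b i \<and> 1 - b i \<le> (\<Sum>t\<in>S i. 1 - p t)"
  shows "\<exists>P. interpretation_of V p P \<and> (\<forall>i\<in>I. (\<Sum>w\<in>{w \<in> Pow V. S i \<subseteq> w}. P w) \<le> b i)"
  using assms
proof (induction V arbitrary: S b rule: finite_remove_induct)
  case empty
  then have "\<forall>i\<in>I. S i = {} \<and> 1 \<le> b i" by auto
  then show ?case by (intro exI[of _ "\<lambda>_. 1"]) (simp add: interpretation_of_def)
next
  case (remove V)
  have "\<Union>(S ` I) \<subseteq> V" using remove.prems(3) by blast
  then obtain v where v: "v \<in> V" "nest_point (S ` I) v"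
    using gamma_acyclic_has_nest_point[OF remove.hyps(1,2) _ remove.prems(2)] by blast
  \<comment> \<open>remove v from every edge, charging the slack 1 - p v to the edges that contained it\<close>
  define b' where "b' i = (if v \<in> S i then b i + 1 - p v else b i)" for i
  have "(\<lambda>i. S i - {v}) ` I = (\<lambda>h. h \<inter> - {v}) ` (S ` I)" by auto
  then have "gamma_acyclic ((\<lambda>i. S i - {v}) ` I)"
    using gamma_acyclic_restrict[OF remove.prems(2)] by simp
  moreover have "\<forall>i\<in>I. S i - {v} \<subseteq> V - {v} \<and> 0 \<le> b' i \<and> 1 - b' i \<le> (\<Sum>t\<in>S i - {v}. 1 - p t)"
  proof
    fix i assume "i \<in> I"
    then have "S i \<subseteq> V" "0 \<le> b i" "1 - b i \<le> (\<Sum>t\<in>S i. 1 - p t)"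
      using remove.prems(3) by auto
    moreover have "finite (S i)" using \<open>S i \<subseteq> V\<close> remove.hyps(1) by (rule finite_subset)
    ultimately show "S i - {v} \<subseteq> V - {v} \<and> 0 \<le> b' i \<and> 1 - b' i \<le> (\<Sum>t\<in>S i - {v}. 1 - p t)"
      using remove.prems(1) v(1) sum.remove[of "S i" v "\<lambda>t. 1 - p t"] unfolding b'_def by auto
  qed
  ultimately obtain P where "interpretation_of (V - {v}) p P"
    "\<forall>i\<in>I. (\<Sum>w\<in>{w \<in> Pow (V - {v}). S i - {v} \<subseteq> w}. P w) \<le> b' i"
    using remove.IH[OF v(1)] remove.prems(1) by blast
  then have "\<exists>P'. interpretation_of (insert v (V - {v})) p P' \<and>
      (\<forall>i\<in>I. (\<Sum>w\<in>{w \<in> Pow (insert v (V - {v})). S i \<subseteq> w}. P' w) \<le> b i)"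
    using interpretation_bounding_edges_insert[of "V - {v}" v p S I b P] remove.hyps(1)
      remove.prems(1,3) v unfolding b'_def by auto
  then show ?case using v(1) by (simp add: insert_absorb)
qed

section \<open>Consistency of probabilistic databases\<close>

lemma interpretation_edge_bound:
  fixes Pr :: "'t set \<Rightarrow> real"
  assumes interp: "interpretation_of D p Pr" and "finite D" "e \<subseteq> D"
    and null: "\<forall>w\<in>Pow D. e \<subseteq> w \<longrightarrow> Pr w = 0"
  shows "(\<Sum>t\<in>e. p t) \<le> real (card e) - 1"
proof -
  have nonneg: "\<forall>w\<in>Pow D. 0 \<le> Pr w" and total: "(\<Sum>w\<in>Pow D. Pr w) = 1"
    and marg: "\<forall>t\<in>D. (\<Sum>w\<in>{w \<in> Pow D. t \<in> w}. Pr w) = p t"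
    using interp unfolding interpretation_of_def by auto
  have fin: "finite e" using assms(3,2) by (rule finite_subset)
  have world: "real (card (e \<inter> w)) * Pr w \<le> (real (card e) - 1) * Pr w" if "w \<in> Pow D" for w
  proof (cases "e \<subseteq> w")
    case False
    then have "card (e \<inter> w) < card e" using fin by (intro psubset_card_mono) auto
    then show ?thesis using nonneg that by (intro mult_right_mono) auto
  qed (use null that in simp)
  have "p t = (\<Sum>w\<in>Pow D. if t \<in> w then Pr w else 0)" if "t \<in> D" for t
  proof -
    have "(\<Sum>w\<in>{w \<in> Pow D. t \<in> w}. Pr w) = (\<Sum>w\<in>Pow D. if t \<in> w then Pr w else 0)"
      by (rule sum.inter_filter) (simp add: assms(2))
    then show ?thesis using marg that by simp
  qed
  then have "(\<Sum>t\<in>e. p t) = (\<Sum>t\<in>e. \<Sum>w\<in>Pow D. if t \<in> w then Pr w else 0)"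
    using assms(3) by (intro sum.cong) auto
  also have "\<dots> = (\<Sum>w\<in>Pow D. \<Sum>t\<in>e. if t \<in> w then Pr w else 0)" by (rule sum.swap)
  also have "\<dots> = (\<Sum>w\<in>Pow D. real (card (e \<inter> w)) * Pr w)"
    using fin by (intro sum.cong) (simp_all add: sum.If_cases Int_def)
  also have "\<dots> \<le> (\<Sum>w\<in>Pow D. (real (card e) - 1) * Pr w)" using world by (rule sum_mono)
  also have "\<dots> = real (card e) - 1" using total by (simp add: sum_distrib_left[symmetric])
  finally show ?thesis .
qed

lemma violates_mono: "violates w IC \<Longrightarrow> w \<subseteq> w' \<Longrightarrow> violates w' IC"
  unfolding violates_def violates_dc_def by fast

lemma violating_world_contains_conflict_edge:
  assumes "finite D" "w \<subseteq> D" "violates w IC"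
  shows "\<exists>e\<in>conflict_edges D IC. e \<subseteq> w"
proof -
  define F where "F = {S. S \<subseteq> w \<and> forces_violation D IC S}"
  have "forces_violation D IC w"
    unfolding forces_violation_def using assms(2,3) violates_mono by blast
  then have "w \<in> F" unfolding F_def by blast
  have "finite w" using assms(2,1) by (rule finite_subset)
  then have "finite F" unfolding F_def by simp
  then obtain m where m: "m \<in> F" "\<forall>S\<in>F. S \<subseteq> m \<longrightarrow> m = S"
    using finite_has_minimal2[OF _ \<open>w \<in> F\<close>] by blast
  have "conflicting_set D IC m"
    unfolding conflicting_set_def
  proof (intro conjI allI impI notI)
    show "forces_violation D IC m" using m unfolding F_def by blast
  next
    fix S assume "S \<subset> m" "forces_violation D IC S"
    then show False using m unfolding F_def by blast
  qed
  then show ?thesis using m unfolding F_def conflict_edges_def by blast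
qed

lemma conflict_edges_subset: "e \<in> conflict_edges D IC \<Longrightarrow> e \<subseteq> D"
  unfolding conflict_edges_def conflicting_set_def forces_violation_def by blast

lemma conflict_edge_bound_if_pdb_models:
  assumes "finite D" "pdb_models D p IC" "e \<in> conflict_edges D IC"
  shows "(\<Sum>t\<in>e. p t) \<le> real (card e) - 1"
proof -
  obtain Pr where interp: "interpretation_of D p Pr"
    and null: "\<forall>w\<in>Pow D. violates w IC \<longrightarrow> Pr w = 0"
    using assms(2) unfolding pdb_models_def is_model_def by blast
  have "\<forall>w\<in>Pow D. e \<subseteq> w \<longrightarrow> violates w IC"
    using assms(3) unfolding conflict_edges_def conflicting_set_def forces_violation_def by blast
  with null have "\<forall>w\<in>Pow D. e \<subseteq> w \<longrightarrow> Pr w = 0" by blast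
  then show ?thesis
    by (rule interpretation_edge_bound[OF interp assms(1) conflict_edges_subset[OF assms(3)]])
qed

lemma is_model_if_conflict_edges_null:
  assumes interp: "interpretation_of D p P" and "finite D"
    and null: "\<forall>e\<in>conflict_edges D IC. (\<Sum>w\<in>{w \<in> Pow D. e \<subseteq> w}. P w) \<le> 0"
  shows "is_model D p IC P"
  unfolding is_model_def
proof (intro conjI ballI impI interp)
  fix w assume w: "w \<in> Pow D" "violates w IC"
  then obtain e where e: "e \<in> conflict_edges D IC" "e \<subseteq> w"
    using violating_world_contains_conflict_edge[OF assms(2)] by blast
  have nonneg: "\<forall>w\<in>Pow D. 0 \<le> P w" using interp by (simp add: interpretation_of_def)
  have "P w \<le> (\<Sum>w\<in>{w \<in> Pow D. e \<subseteq> w}. P w)"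
    using w e nonneg assms(2) by (intro member_le_sum) auto
  moreover have "(\<Sum>w\<in>{w \<in> Pow D. e \<subseteq> w}. P w) \<le> 0" using null e(1) by blast
  moreover have "0 \<le> P w" using nonneg w(1) by blast
  ultimately show "P w = 0" by linarith
qed

lemma pdb_models_if_conflict_edge_bounds:
  assumes "finite D" "\<forall>t\<in>D. 0 \<le> p t \<and> p t \<le> 1" "gamma_acyclic (conflict_edges D IC)"
    and edges: "\<forall>e\<in>conflict_edges D IC. (\<Sum>t\<in>e. p t) \<le> real (card e) - 1"
  shows "pdb_models D p IC"
proof -
  have "gamma_acyclic (id ` conflict_edges D IC)" using assms(3) by simp
  moreover have "\<forall>e\<in>conflict_edges D IC. id e \<subseteq> D \<and> 0 \<le> (0::real) \<and> 1 - 0 \<le> (\<Sum>t\<in>id e. 1 - p t)"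
    using edges by (auto simp: sum_subtractf dest: conflict_edges_subset)
  ultimately have "\<exists>P. interpretation_of D p P \<and>
      (\<forall>e\<in>conflict_edges D IC. (\<Sum>w\<in>{w \<in> Pow D. id e \<subseteq> w}. P w) \<le> 0)"
    by (rule exists_interpretation_bounding_edges[OF assms(1,2)])
  then obtain P where "interpretation_of D p P"
    "\<forall>e\<in>conflict_edges D IC. (\<Sum>w\<in>{w \<in> Pow D. e \<subseteq> w}. P w) \<le> 0"
    by auto
  then show ?thesis unfolding pdb_models_def using is_model_if_conflict_edges_null assms(1) by blast
qed

theorem theorem2:
  fixes D :: "('r, 'v::linorder) tuple set"
    and p :: "('r, 'v) tuple \<Rightarrow> real"
    and IC :: "('r, 'v) denial_constraint set"
  assumes "finite D"
    and "\<forall>t \<in> D. 0 \<le> p t \<and> p t \<le> 1"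
    and "hypertree D (conflict_edges D IC)"
  shows "pdb_models D p IC \<longleftrightarrow>
         (\<forall>e \<in> conflict_edges D IC. (\<Sum>t \<in> e. p t) \<le> real (card e) - 1)"
proof
  assume "pdb_models D p IC"
  then show "\<forall>e \<in> conflict_edges D IC. (\<Sum>t \<in> e. p t) \<le> real (card e) - 1"
    by (intro ballI conflict_edge_bound_if_pdb_models[OF assms(1)])
next
  assume "\<forall>e \<in> conflict_edges D IC. (\<Sum>t \<in> e. p t) \<le> real (card e) - 1"
  then show "pdb_models D p IC"
    by (rule pdb_models_if_conflict_edge_bounds[OF assms(1,2) gamma_acyclic_if_hypertree[OF assms(3)]])
qed

end
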